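(* Let $\mathcal{M}=\langle S,\to,L\rangle$ be a labeled transition system, let $B\subseteq S\times S$ be a skipping simulation on $\mathcal{M}$, and let $s,w\in S$. Then every path (branch from the root) of the tree $\mathit{ranktCt}(\mathcal{M},s,w)$ is finite.
   Context: A labeled transition system is $\mathcal{M}=\langle S,\to,L\rangle$ where $S$ is a non-empty set of states, $\to\subseteq S\times S$ is left-total, and $L$ is a function with domain $S$. A fullpath is an infinite sequence $\sigma$ with $\sigma(i)\to\sigma(i+1)$ for all $i$; it starts at $\sigma(0)$. $w\to^{+}v$ means there is a finite path $w=v_0\to\cdots\to v_k=v$ with $k\ge1$. Let $\mathit{INC}$ be the set of strictly increasing infinite sequences of naturals starting at $0$. For a fullpath $\sigma$ and $\pi\in\mathit{INC}$ the $i$-th segment of $\sigma$ is $\sigma(\pi(i)),\dots,\sigma(\pi(i+1)-1)$. $\mathit{match}(B,\sigma,\delta)$ holds iff there exist $\pi,\xi\in\mathit{INC}$ such that for every $i$ and every state $x$ in the $i$-th segment of $\sigma$ w.r.t. $\pi$, $xB\delta(\xi(i))$. $B$ is a skipping simulation (SKS) iff for all $s,w$ with $sBw$: $L(s)=L(w)$, and for every fullpath $\sigma$ starting at $s$ there is a fullpath $\delta$ starting at $w$ with $\mathit{match}(B,\sigma,\delta)$. The computation tree $\mathit{ctree}(\mathcal{M},s)$ has as nodes finite sequences over $S$; it is the smallest tree such that $\langle s\rangle$ is the root, and if $\langle s,\dots,x\rangle$ is a node and $x\to y$ then $\langle s,\dots,x,y\rangle$ is a node whose parent is $\langle s,\dots,x\rangle$.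 For the SKS $B$: if not $sBw$, $\mathit{ranktCt}(\mathcal{M},s,w)$ is the empty tree; otherwise it is the largest subtree of $\mathit{ctree}(\mathcal{M},s)$ (containing the root) such that every non-root node $\langle s,\dots,x\rangle$ satisfies $xBw$ and, for all $v$ with $w\to^{+}v$, not $xBv$. *)

theory Defs
  imports Main
begin

definition lts :: "'a set \<Rightarrow> ('a \<times> 'a) set \<Rightarrow> ('a \<Rightarrow> 'l) \<Rightarrow> bool" where
  "lts S R L \<longleftrightarrow> S \<noteq> {} \<and> R \<subseteq> S \<times> S \<and> (\<forall>x\<in>S. \<exists>y. (x, y) \<in> R)"

definition fullpath :: "('a \<times> 'a) set \<Rightarrow> (nat \<Rightarrow> 'a) \<Rightarrow> bool" where
  "fullpath R \<sigma> \<longleftrightarrow> (\<forall>i. (\<sigma> i, \<sigma> (Suc i)) \<in> R)"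

definition INC :: "(nat \<Rightarrow> nat) set" where
  "INC = {\<pi>. strict_mono \<pi> \<and> \<pi> 0 = 0}"

definition match :: "('a \<times> 'a) set \<Rightarrow> (nat \<Rightarrow> 'a) \<Rightarrow> (nat \<Rightarrow> 'a) \<Rightarrow> bool" where
  "match B \<sigma> \<delta> \<longleftrightarrow> (\<exists>\<pi>\<in>INC. \<exists>\<xi>\<in>INC. \<forall>i j. \<pi> i \<le> j \<and> j < \<pi> (Suc i) \<longrightarrow> (\<sigma> j, \<delta> (\<xi> i)) \<in> B)"

definition SKS :: "'a set \<Rightarrow> ('a \<times> 'a) set \<Rightarrow> ('a \<Rightarrow> 'l) \<Rightarrow> ('a \<times> 'a) set \<Rightarrow> bool" where
  "SKS S R L B \<longleftrightarrow> B \<subseteq> S \<times> S \<and>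
     (\<forall>s w. (s, w) \<in> B \<longrightarrow> L s = L w \<and>
        (\<forall>\<sigma>. fullpath R \<sigma> \<and> \<sigma> 0 = s \<longrightarrow> (\<exists>\<delta>. fullpath R \<delta> \<and> \<delta> 0 = w \<and> match B \<sigma> \<delta>)))"

text \<open>Computation tree: nodes are finite state sequences; the parent of a non-root node
  is obtained by dropping its last element.\<close>
inductive_set ctree :: "('a \<times> 'a) set \<Rightarrow> 'a \<Rightarrow> 'a list set" for R s where
  root: "[s] \<in> ctree R s"
| child: "ns \<in> ctree R s \<Longrightarrow> (last ns, y) \<in> R \<Longrightarrow> ns @ [y] \<in> ctree R s"

definition subtree_root :: "('a \<times> 'a) set \<Rightarrow> 'a \<Rightarrow> 'a list set \<Rightarrow> bool" where
  "subtree_root R s T \<longleftrightarrow> T \<subseteq> ctree R s \<and> [s] \<in> T \<and>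
     (\<forall>ns y. ns @ [y] \<in> T \<and> ns \<noteq> [] \<longrightarrow> ns \<in> T)"

definition ranktCt :: "('a \<times> 'a) set \<Rightarrow> ('a \<times> 'a) set \<Rightarrow> 'a \<Rightarrow> 'a \<Rightarrow> 'a list set" where
  "ranktCt R B s w =
     (if (s, w) \<notin> B then {}
      else \<Union> {T. subtree_root R s T \<and>
                 (\<forall>ns\<in>T. ns \<noteq> [s] \<longrightarrow>
                    (last ns, w) \<in> B \<and> (\<forall>v. (w, v) \<in> R\<^sup>+ \<longrightarrow> (last ns, v) \<notin> B))})"

end

theory Submission
  imports Defs
begin

text \<open>A branch of the tree is a fullpath \<open>\<sigma>\<close> from \<open>s\<close> all of whose states after the root
  are related by \<open>B\<close> to \<open>w\<close> but to no state strictly reachable from \<open>w\<close>. Matching \<open>\<sigma>\<close> against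
  a fullpath \<open>\<delta>\<close> from \<open>w\<close>, as the skipping simulation demands, relates the first state of
  the second segment of \<open>\<sigma>\<close> (which lies after the root) to a state \<open>\<delta> k\<close> with \<open>k \<ge> 1\<close>,
  i.e. to a state strictly reachable from \<open>w\<close> -- a contradiction.\<close>

lemma fullpath_trancl:
  assumes "fullpath R \<delta>" and "m < n"
  shows "(\<delta> m, \<delta> n) \<in> R\<^sup>+"
  using \<open>m < n\<close>
proof (induction n)
  case 0
  then show ?case by simp
next
  case (Suc n)
  have step: "(\<delta> n, \<delta> (Suc n)) \<in> R"
    using assms(1) unfolding fullpath_def by blast
  show ?case
  proof (cases "m = n")
    case True
    then show ?thesis using step by auto
  next
    case False
    then show ?thesis using Suc step by (meson less_SucE trancl_into_trancl)
  qed
qed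

lemma INC_pos:
  assumes "\<pi> \<in> INC" and "0 < i"
  shows "0 < \<pi> i"
  using assms strict_monoD[of \<pi> 0 i] unfolding INC_def by auto

lemma match_after_start:
  assumes "match B \<sigma> \<delta>"
  obtains j k where "0 < j" and "0 < k" and "(\<sigma> j, \<delta> k) \<in> B"
proof -
  obtain \<pi> \<xi> where \<pi>: "\<pi> \<in> INC" and \<xi>: "\<xi> \<in> INC"
    and seg: "\<And>i j. \<pi> i \<le> j \<and> j < \<pi> (Suc i) \<Longrightarrow> (\<sigma> j, \<delta> (\<xi> i)) \<in> B"
    using assms unfolding match_def by blast
  have "\<pi> 1 < \<pi> (Suc 1)"
    using \<pi> unfolding INC_def by (simp add: strict_monoD)
  then have "(\<sigma> (\<pi> 1), \<delta> (\<xi> 1)) \<in> B"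
    by (intro seg) simp
  moreover have "0 < \<pi> 1" and "0 < \<xi> 1"
    using INC_pos[OF \<pi>, of 1] INC_pos[OF \<xi>, of 1] by simp_all
  ultimately show ?thesis by (intro that)
qed

lemma ctree_last_step:
  assumes "ns @ [y] \<in> ctree R s" and "ns \<noteq> []"
  shows "(last ns, y) \<in> R"
  using assms by (cases rule: ctree.cases) auto

lemma ranktCt_subset_ctree: "ranktCt R B s w \<subseteq> ctree R s"
  unfolding ranktCt_def subtree_root_def by auto

lemma ranktCt_mem_imp_related: "ns \<in> ranktCt R B s w \<Longrightarrow> (s, w) \<in> B"
  unfolding ranktCt_def by (auto split: if_splits)

lemma ranktCt_not_related_beyond:
  assumes "ns \<in> ranktCt R B s w" and "ns \<noteq> [s]" and "(w, v) \<in> R\<^sup>+"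
  shows "(last ns, v) \<notin> B"
  using assms unfolding ranktCt_def by (auto split: if_splits)

lemma branch_length:
  assumes "nd 0 = [s]" and "\<And>i. \<exists>y. nd (Suc i) = nd i @ [y]"
  shows "length (nd i) = Suc i"
proof (induction i)
  case 0
  then show ?case using assms(1) by simp
next
  case (Suc i)
  then show ?case using assms(2)[of i] by auto
qed

lemma ctree_branch_fullpath:
  assumes "nd 0 = [s]" and "\<And>i. \<exists>y. nd (Suc i) = nd i @ [y]"
    and "\<And>i. nd i \<in> ctree R s"
  shows "fullpath R (\<lambda>i. last (nd i))"
  unfolding fullpath_def
proof
  fix i
  obtain y where y: "nd (Suc i) = nd i @ [y]"
    using assms(2) by blast
  have "nd i \<noteq> []"
    using branch_length[OF assms(1,2), of i] by auto
  then have "(last (nd i), y) \<in> R"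
    using ctree_last_step assms(3) y by metis
  then show "(last (nd i), last (nd (Suc i))) \<in> R"
    using y by simp
qed

theorem lemma1:
  fixes S :: "'a set" and R :: "('a \<times> 'a) set" and L :: "'a \<Rightarrow> 'l" and B :: "('a \<times> 'a) set"
  assumes "lts S R L" and "SKS S R L B" and "s \<in> S" and "w \<in> S"
  shows "\<not> (\<exists>nd :: nat \<Rightarrow> 'a list. nd 0 = [s] \<and>
            (\<forall>i. nd i \<in> ranktCt R B s w \<and> (\<exists>y. nd (Suc i) = nd i @ [y])))"
proof
  assume "\<exists>nd :: nat \<Rightarrow> 'a list. nd 0 = [s] \<and>
            (\<forall>i. nd i \<in> ranktCt R B s w \<and> (\<exists>y. nd (Suc i) = nd i @ [y]))"
  then obtain nd :: "nat \<Rightarrow> 'a list" where root: "nd 0 = [s]"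
    and in_tree: "\<And>i. nd i \<in> ranktCt R B s w"
    and grows: "\<And>i. \<exists>y. nd (Suc i) = nd i @ [y]" by blast
  define \<sigma> where "\<sigma> i = last (nd i)" for i
  have "fullpath R \<sigma>"
    unfolding \<sigma>_def
    using ctree_branch_fullpath[OF root grows] ranktCt_subset_ctree in_tree by (metis subsetD)
  moreover have "\<sigma> 0 = s"
    unfolding \<sigma>_def using root by simp
  moreover have "(s, w) \<in> B"
    using ranktCt_mem_imp_related[OF in_tree] .
  ultimately obtain \<delta> where "fullpath R \<delta>" and "\<delta> 0 = w" and "match B \<sigma> \<delta>"
    using assms(2) unfolding SKS_def by blast
  obtain j k where "0 < j" and "0 < k" and related: "(\<sigma> j, \<delta> k) \<in> B"
    using match_after_start[OF \<open>match B \<sigma> \<delta>\<close>] .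
  have "(w, \<delta> k) \<in> R\<^sup>+"
    using fullpath_trancl[OF \<open>fullpath R \<delta>\<close> \<open>0 < k\<close>] \<open>\<delta> 0 = w\<close> by simp
  moreover have "nd j \<noteq> [s]"
    using branch_length[OF root grows, of j] \<open>0 < j\<close> by auto
  ultimately show False
    using ranktCt_not_related_beyond[OF in_tree] related unfolding \<sigma>_def by blast
qed

end
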